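(* Let $b>1$, $g_0(t)=b^j$ for $j<t\leq j+1$ ($j\in\mathbb{N}_0$), $\lambda_b=\left(\arccos\frac1{R_b}\right)^2$ with $R_b=\frac{b^{1/2}+b^{-1/2}}2$. Let $\omega$ be a nonzero function on $\mathbb{R}_+$ with $\omega(0)>0$ satisfying in the distributional sense $-(g_0\omega')'=\lambda_bg_0\omega$ together with $\omega'(0)=0$, $\omega(j+)=\omega(j-)$ and $\omega'(j-)=b\,\omega'(j+)$ for all $j\in\mathbb{N}$. Then there exist constants $0<C_1<C_2<\infty$ such that \[ C_1\frac{1+t}{\sqrt{g_0(t)}}\leq\omega(t)\leq C_2\frac{1+t}{\sqrt{g_0(t)}},\qquad t\geq0. \] *)

theory Defs
  imports "HOL-Analysis.Analysis"
begin

text \<open>g_0(t) = b^j for j < t \<le> j+1 (j = 0,1,...); at t = 0 we use the value b^0 = 1.\<close>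
definition g0 :: "real \<Rightarrow> real \<Rightarrow> real" where
  "g0 b t = b ^ nat (\<lceil>t\<rceil> - 1)"

definition R_b :: "real \<Rightarrow> real" where
  "R_b b = (sqrt b + 1 / sqrt b) / 2"

definition lambda_b :: "real \<Rightarrow> real" where
  "lambda_b b = (arccos (1 / R_b b))\<^sup>2"

end

theory Submission
  imports Defs
begin

text \<open>On each cell \<open>(j, j+1)\<close> the weight \<open>g\<^sub>0\<close> is constant, so \<open>\<omega>'' = -\<lambda>\<^sub>b \<omega>\<close> there,
  and the matching conditions at the integers make the data \<open>(\<omega>(j), \<omega>'(j+))\<close> the orbit of a
  linear transfer map. With \<open>\<mu> = \<surd>\<lambda>\<^sub>b\<close> one has \<open>cos \<mu> = 2\<surd>b/(b+1)\<close> and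
  \<open>sin \<mu> = (b-1)/(b+1)\<close>; for exactly this \<open>\<mu>\<close> the transfer map is a Jordan block at the double
  eigenvalue \<open>1/\<surd>b\<close>, so \<open>\<omega>(j) = \<omega>(0) b\<^sup>-\<^sup>j\<^sup>/\<^sup>2 (1 + j sin \<mu>)\<close>. Inside a cell \<open>\<omega>\<close> stays
  between its values at the two ends, which gives both bounds.\<close>

lemma harmonic_oscillator_unique:
  fixes w D :: "real \<Rightarrow> real" and a c x y \<mu> t :: real
  assumes \<mu>: "\<mu> > 0"
    and ode: "\<And>s. a < s \<Longrightarrow> s < c \<Longrightarrow>
       (w has_real_derivative D s) (at s) \<and> (D has_real_derivative - (\<mu>\<^sup>2) * w s) (at s)"
    and w_lim: "(w \<longlongrightarrow> x) (at_right a)" and D_lim: "(D \<longlongrightarrow> y) (at_right a)"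
    and t: "a < t" "t < c"
  shows "w t = x * cos (\<mu> * (t - a)) + y * sin (\<mu> * (t - a)) / \<mu> \<and>
         D t = - \<mu> * x * sin (\<mu> * (t - a)) + y * cos (\<mu> * (t - a))"
proof -
  define u where "u s = w s - (x * cos (\<mu> * (s - a)) + y * sin (\<mu> * (s - a)) / \<mu>)" for s
  define v where "v s = D s - (- \<mu> * x * sin (\<mu> * (s - a)) + y * cos (\<mu> * (s - a)))" for s
  define E where "E s = \<mu>\<^sup>2 * (u s)\<^sup>2 + (v s)\<^sup>2" for s
  have du: "(u has_real_derivative v s) (at s)" if "a < s" "s < c" for s
  proof -
    have "(u has_real_derivative D s - (x * (- sin (\<mu> * (s - a)) * (\<mu> * 1))
            + y * (cos (\<mu> * (s - a)) * (\<mu> * 1)) / \<mu>)) (at s)"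
      unfolding u_def using ode[OF that] by (auto intro!: derivative_eq_intros)
    then show ?thesis using \<mu> by (simp add: v_def field_simps)
  qed
  have dv: "(v has_real_derivative - (\<mu>\<^sup>2) * u s) (at s)" if "a < s" "s < c" for s
  proof -
    have "(v has_real_derivative - (\<mu>\<^sup>2) * w s - (- \<mu> * x * (cos (\<mu> * (s - a)) * (\<mu> * 1))
            + y * (- sin (\<mu> * (s - a)) * (\<mu> * 1)))) (at s)"
      unfolding v_def using ode[OF that] by (auto intro!: derivative_eq_intros)
    moreover have "- (\<mu>\<^sup>2) * w s - (- \<mu> * x * (cos (\<mu> * (s - a)) * (\<mu> * 1))
            + y * (- sin (\<mu> * (s - a)) * (\<mu> * 1))) = - (\<mu>\<^sup>2) * u s"
      using \<mu> by (simp add: u_def field_simps power2_eq_square)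
    ultimately show ?thesis by simp
  qed
  have dE: "(E has_real_derivative 0) (at s within {a<..<c})" if "s \<in> {a<..<c}" for s
  proof -
    from that have s: "a < s" "s < c" by auto
    have "(E has_real_derivative \<mu>\<^sup>2 * (2 * u s * v s) + 2 * v s * (- (\<mu>\<^sup>2) * u s)) (at s)"
      unfolding E_def using du[OF s] dv[OF s]
      by (auto intro!: derivative_eq_intros simp: power2_eq_square)
    then show ?thesis by (auto intro: has_field_derivative_at_within simp: algebra_simps)
  qed
  obtain e where e: "\<forall>s\<in>{a<..<c}. E s = e"
    using has_field_derivative_zero_constant[OF convex_real_interval(8) dE] by blast
  have "(u \<longlongrightarrow> x - (x * cos (\<mu> * (a - a)) + y * sin (\<mu> * (a - a)) / \<mu>)) (at_right a)"
    unfolding u_def by (intro tendsto_intros w_lim) (use \<mu> in auto)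
  moreover have "(v \<longlongrightarrow> y - (- \<mu> * x * sin (\<mu> * (a - a)) + y * cos (\<mu> * (a - a)))) (at_right a)"
    unfolding v_def by (intro tendsto_intros D_lim)
  ultimately have "(E \<longlongrightarrow> \<mu>\<^sup>2 * 0\<^sup>2 + 0\<^sup>2) (at_right a)"
    unfolding E_def by (intro tendsto_intros) simp_all
  moreover have "eventually (\<lambda>s. E s = e) (at_right a)"
    unfolding eventually_at_right_field using e t by (intro exI[of _ c]) auto
  ultimately have "((\<lambda>_. e) \<longlongrightarrow> 0) (at_right a)"
    by (simp add: tendsto_cong)
  then have "e = 0" using tendsto_const_iff[OF trivial_limit_at_right_real] by blast
  with e t have "\<mu>\<^sup>2 * (u t)\<^sup>2 + (v t)\<^sup>2 = 0" by (auto simp: E_def)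
  then have "u t = 0 \<and> v t = 0" using \<mu> by (simp add: add_nonneg_eq_0_iff)
  then show ?thesis unfolding u_def v_def by auto
qed

lemma harmonic_oscillator_on_interval:
  fixes w D :: "real \<Rightarrow> real" and a c y \<mu> :: real
  assumes \<mu>: "\<mu> > 0" and "a < c"
    and cont: "continuous_on {a..c} w"
    and ode: "\<And>s. a < s \<Longrightarrow> s < c \<Longrightarrow>
       (w has_real_derivative D s) (at s) \<and> (D has_real_derivative - (\<mu>\<^sup>2) * w s) (at s)"
    and D_lim: "(D \<longlongrightarrow> y) (at_right a)"
  shows "\<And>t. t \<in> {a..c} \<Longrightarrow> w t = w a * cos (\<mu> * (t - a)) + y * sin (\<mu> * (t - a)) / \<mu>"
    and "(D \<longlongrightarrow> - \<mu> * w a * sin (\<mu> * (c - a)) + y * cos (\<mu> * (c - a))) (at_left c)"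
proof -
  define W where "W t = w a * cos (\<mu> * (t - a)) + y * sin (\<mu> * (t - a)) / \<mu>" for t
  define V where "V t = - \<mu> * w a * sin (\<mu> * (t - a)) + y * cos (\<mu> * (t - a))" for t
  have inside: "w t = W t \<and> D t = V t" if "a < t" "t < c" for t
    unfolding W_def V_def
    using harmonic_oscillator_unique[OF \<mu> ode _ D_lim that]
      continuous_on_Icc_at_rightD[OF cont \<open>a < c\<close>] by blast
  have near_c: "eventually (\<lambda>t. w t = W t \<and> D t = V t) (at_left c)"
    unfolding eventually_at_left_field using inside \<open>a < c\<close> by (intro exI[of _ a]) auto
  have W_cont: "(W \<longlongrightarrow> W c) (at_left c)" and V_cont: "(V \<longlongrightarrow> V c) (at_left c)"
    unfolding W_def V_def using \<mu> by (auto intro!: tendsto_eq_intros)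
  have W_lim: "(w \<longlongrightarrow> W c) (at_left c)"
    by (rule Lim_transform_eventually[OF W_cont]) (use near_c in \<open>simp add: eventually_mono\<close>)
  have "(D \<longlongrightarrow> V c) (at_left c)"
    by (rule Lim_transform_eventually[OF V_cont]) (use near_c in \<open>simp add: eventually_mono\<close>)
  then show "(D \<longlongrightarrow> - \<mu> * w a * sin (\<mu> * (c - a)) + y * cos (\<mu> * (c - a))) (at_left c)"
    by (simp add: V_def)
  fix t assume t: "t \<in> {a..c}"
  have "w c = W c"
    using tendsto_unique[OF trivial_limit_at_left_real
        continuous_on_Icc_at_leftD[OF cont \<open>a < c\<close>] W_lim] .
  moreover have "w a = W a" by (simp add: W_def)
  ultimately show "w t = W t"
    using t inside by (metis atLeastAtMost_iff order_less_le)
qed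

locale piecewise_harmonic_orbit =
  fixes w D :: "real \<Rightarrow> real" and b \<mu> :: real and X Y :: "nat \<Rightarrow> real"
  assumes mu_pos: "\<mu> > 0" and b_nonzero: "b \<noteq> 0"
    and cont: "continuous_on {0..} w"
    and ode: "\<And>(j::nat) t. real j < t \<Longrightarrow> t < real j + 1 \<Longrightarrow>
       (w has_real_derivative D t) (at t) \<and> (D has_real_derivative - (\<mu>\<^sup>2) * w t) (at t)"
    and jump: "\<And>(j::nat). j \<ge> 1 \<Longrightarrow>
       \<exists>r. (D \<longlongrightarrow> b * r) (at_left (real j)) \<and> (D \<longlongrightarrow> r) (at_right (real j))"
    and X_0: "X 0 = w 0" and Y_0: "(D \<longlongrightarrow> Y 0) (at_right 0)"
    and X_Suc: "\<And>j. X (Suc j) = X j * cos \<mu> + Y j * sin \<mu> / \<mu>"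
    and Y_Suc: "\<And>j. b * Y (Suc j) = - \<mu> * X j * sin \<mu> + Y j * cos \<mu>"
begin

lemma continuous_on_cell: "continuous_on {real j..real j + 1} w"
  by (rule continuous_on_subset[OF cont]) auto

lemma orbit_at_integers: "w (real j) = X j \<and> (D \<longlongrightarrow> Y j) (at_right (real j))"
proof (induction j)
  case 0
  then show ?case using X_0 Y_0 by simp
next
  case (Suc j)
  note osc = harmonic_oscillator_on_interval[OF mu_pos _ continuous_on_cell ode[of j]
      conjunct2[OF Suc.IH]]
  have "w (real (Suc j)) = X (Suc j)"
    using osc(1)[of "real j + 1"] Suc.IH X_Suc[of j] by (simp add: ac_simps)
  moreover obtain r where r: "(D \<longlongrightarrow> b * r) (at_left (real (Suc j)))"
      "(D \<longlongrightarrow> r) (at_right (real (Suc j)))"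
    using jump[of "Suc j"] by auto
  have "b * r = b * Y (Suc j)"
    using tendsto_unique[OF trivial_limit_at_left_real r(1)] osc(2) Suc.IH Y_Suc[of j]
    by (simp add: add.commute)
  with r(2) b_nonzero have "(D \<longlongrightarrow> Y (Suc j)) (at_right (real (Suc j)))" by simp
  ultimately show ?case ..
qed

lemma solution_on_cell:
  assumes "t \<in> {real j..real j + 1}"
  shows "w t = X j * cos (\<mu> * (t - j)) + Y j * sin (\<mu> * (t - j)) / \<mu>"
  using harmonic_oscillator_on_interval(1)[OF mu_pos _ continuous_on_cell ode
      conjunct2[OF orbit_at_integers] assms] orbit_at_integers by simp

end

lemma inverse_R_b: "b > 0 \<Longrightarrow> 1 / R_b b = 2 * sqrt b / (b + 1)"
  by (simp add: R_b_def field_simps)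

lemma inverse_R_b_bounds:
  assumes "b > 1"
  shows "0 < 1 / R_b b" "1 / R_b b < 1"
proof -
  have "0 < (sqrt b - 1)\<^sup>2" using assms by simp
  then have "2 * sqrt b < b + 1" using assms by (simp add: power2_eq_square algebra_simps)
  then show "0 < 1 / R_b b" "1 / R_b b < 1" using assms by (simp_all add: inverse_R_b)
qed

lemma cos_arccos_inverse_R_b: "b > 1 \<Longrightarrow> cos (arccos (1 / R_b b)) = 2 * sqrt b / (b + 1)"
proof -
  assume "b > 1"
  then have "cos (arccos (1 / R_b b)) = 1 / R_b b"
    using inverse_R_b_bounds[of b] by (intro cos_arccos) linarith+
  with \<open>b > 1\<close> show ?thesis by (simp add: inverse_R_b)
qed

lemma sin_arccos_inverse_R_b:
  assumes "b > 1"
  shows "sin (arccos (1 / R_b b)) = (b - 1) / (b + 1)"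
proof -
  have "1 - (2 * sqrt b / (b + 1))\<^sup>2 = 1 - 4 * b / (b + 1)\<^sup>2"
    using assms by (simp add: power_divide power_mult_distrib)
  also have "\<dots> = ((b + 1)\<^sup>2 - 4 * b) / (b + 1)\<^sup>2"
    using assms by (simp add: diff_divide_distrib)
  also have "(b + 1)\<^sup>2 - 4 * b = (b - 1)\<^sup>2"
    by algebra
  also have "(b - 1)\<^sup>2 / (b + 1)\<^sup>2 = ((b - 1) / (b + 1))\<^sup>2"
    by (simp add: power_divide)
  finally have "1 - (2 * sqrt b / (b + 1))\<^sup>2 = ((b - 1) / (b + 1))\<^sup>2" .
  then show ?thesis
    using assms inverse_R_b_bounds[OF assms] by (simp add: sin_arccos_abs inverse_R_b)
qed

lemma arccos_inverse_R_b_bounds: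
  assumes "b > 1"
  shows "0 < arccos (1 / R_b b)" "arccos (1 / R_b b) < pi / 2"
  using arccos_less_arccos[of "1 / R_b b" 1] arccos_less_arccos[of 0 "1 / R_b b"]
    inverse_R_b_bounds[OF assms] by simp_all

lemma explicit_transfer_orbit:
  fixes b \<mu> w0 :: real and X Y :: "nat \<Rightarrow> real"
  assumes "b > 1" "\<mu> \<noteq> 0"
    and cos: "cos \<mu> = 2 * sqrt b / (b + 1)" and sin: "sin \<mu> = (b - 1) / (b + 1)"
    and X_def: "\<And>j. X j = w0 * (1 / sqrt b) ^ j * (1 + sin \<mu> * real j)"
    and Y_def: "\<And>j. Y j = - \<mu> * w0 * (1 / sqrt b) ^ Suc j * sin \<mu> * real j"
  shows "X (Suc j) = X j * cos \<mu> + Y j * sin \<mu> / \<mu>"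
    and "b * Y (Suc j) = - \<mu> * X j * sin \<mu> + Y j * cos \<mu>"
proof -
  define r where "r = sqrt b"
  define q where "q = 1 / r"
  define s where "s = sin \<mu>"
  have r: "r > 0" "sqrt b = r" "b = r\<^sup>2" using \<open>b > 1\<close> by (simp_all add: r_def)
  have "r\<^sup>2 + 1 > 0" by (simp add: add_nonneg_pos)
  have s_r: "s = (r\<^sup>2 - 1) / (r\<^sup>2 + 1)" unfolding s_def sin r(3) ..
  have cos_r: "cos \<mu> = 2 * r / (r\<^sup>2 + 1)" unfolding cos r(2) unfolding r(3) ..
  have "1 + s = 2 * r\<^sup>2 / (r\<^sup>2 + 1)"
    unfolding s_r using \<open>r\<^sup>2 + 1 > 0\<close> by (simp add: field_simps)
  then have cos_q: "cos \<mu> = q * (1 + s)"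
    unfolding cos_r q_def using \<open>r\<^sup>2 + 1 > 0\<close> r(1) by (simp add: field_simps power2_eq_square)
  have "q * cos \<mu> = 2 / (r\<^sup>2 + 1)" unfolding cos_r q_def using r(1) by simp
  then have s_q: "s + q * cos \<mu> = 1"
    unfolding s_r using \<open>r\<^sup>2 + 1 > 0\<close> by (simp flip: add_divide_distrib)
  have qqb: "q * q * b = 1" using r by (simp add: q_def power2_eq_square)
  have X_q: "X k = w0 * q ^ k * (1 + s * k)" and Y_q: "Y k = - \<mu> * w0 * q ^ Suc k * s * k" for k
    by (simp_all add: X_def Y_def q_def s_def r(2))
  have "X j * cos \<mu> + Y j * sin \<mu> / \<mu> = w0 * q ^ j * (q * (1 + s) * (1 + s * j) - q * s * s * j)"
    using \<open>\<mu> \<noteq> 0\<close> unfolding X_q Y_q cos_q s_def[symmetric] by (simp add: algebra_simps)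
  also have "\<dots> = X (Suc j)" by (simp add: X_q algebra_simps)
  finally show "X (Suc j) = X j * cos \<mu> + Y j * sin \<mu> / \<mu>" ..
  have "- \<mu> * X j * sin \<mu> + Y j * cos \<mu> = - \<mu> * s * w0 * q ^ j * (1 + j * (s + q * cos \<mu>))"
    unfolding X_q Y_q s_def[symmetric] by (simp add: algebra_simps)
  also have "\<dots> = (q * q * b) * (- \<mu> * s * w0 * q ^ j * (1 + j))" by (simp add: s_q qqb)
  also have "\<dots> = b * Y (Suc j)" by (simp add: Y_q algebra_simps)
  finally show "b * Y (Suc j) = - \<mu> * X j * sin \<mu> + Y j * cos \<mu>" ..
qed

lemma cos_sin_combination_bounds:
  fixes x y \<mu> \<tau> :: real
  assumes "0 \<le> x" "0 \<le> y" "0 \<le> \<mu>" "\<mu> \<le> pi / 2" "0 \<le> \<tau>" "\<tau> \<le> 1"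
  shows "x * cos \<mu> - y * sin \<mu> \<le> x * cos (\<mu> * \<tau>) - y * sin (\<mu> * \<tau>)"
    and "x * cos (\<mu> * \<tau>) - y * sin (\<mu> * \<tau>) \<le> x"
proof -
  have "\<mu> * \<tau> \<le> \<mu>" using assms by (simp add: mult_left_le)
  moreover have "0 \<le> \<mu> * \<tau>" using assms by simp
  ultimately have "cos \<mu> \<le> cos (\<mu> * \<tau>)" "sin (\<mu> * \<tau>) \<le> sin \<mu>" "0 \<le> sin (\<mu> * \<tau>)"
    using assms pi_gt_zero
    by (auto intro!: cos_monotone_0_pi_le sin_monotone_2pi_le sin_ge_zero simp del: mult_nonneg_nonneg)
  with assms show "x * cos \<mu> - y * sin \<mu> \<le> x * cos (\<mu> * \<tau>) - y * sin (\<mu> * \<tau>)"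
    and "x * cos (\<mu> * \<tau>) - y * sin (\<mu> * \<tau>) \<le> x"
    using mult_left_mono[of _ _ x] mult_left_mono[of _ _ y] mult_left_mono[OF cos_le_one, of x]
    by (smt (verit) mult_nonneg_nonneg)+
qed

lemma explicit_orbit_cell_bounds:
  fixes b \<mu> w0 \<tau> :: real and X Y :: "nat \<Rightarrow> real"
  assumes "b > 1" "0 < \<mu>" "\<mu> \<le> pi / 2" "0 \<le> w0" "0 \<le> \<tau>" "\<tau> \<le> 1"
    and cos: "cos \<mu> = 2 * sqrt b / (b + 1)" and sin: "sin \<mu> = (b - 1) / (b + 1)"
    and X_def: "\<And>j. X j = w0 * (1 / sqrt b) ^ j * (1 + sin \<mu> * real j)"
    and Y_def: "\<And>j. Y j = - \<mu> * w0 * (1 / sqrt b) ^ Suc j * sin \<mu> * real j"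
  shows "X (Suc j) \<le> X j * cos (\<mu> * \<tau>) + Y j * sin (\<mu> * \<tau>) / \<mu>"
    and "X j * cos (\<mu> * \<tau>) + Y j * sin (\<mu> * \<tau>) / \<mu> \<le> X j"
proof -
  define y where "y = w0 * (1 / sqrt b) ^ Suc j * sin \<mu> * real j"
  have Y_y: "Y j * sin \<theta> / \<mu> = - (y * sin \<theta>)" for \<theta>
    using \<open>0 < \<mu>\<close> by (simp add: Y_def y_def)
  have "0 \<le> sin \<mu>" using \<open>b > 1\<close> by (simp add: sin)
  then have "0 \<le> X j" "0 \<le> y" using \<open>0 \<le> w0\<close> \<open>b > 1\<close> by (simp_all add: X_def y_def)
  note bounds = cos_sin_combination_bounds[OF this \<open>0 < \<mu>\<close>[THEN less_imp_le] assms(3,5,6)]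
  have "X (Suc j) = X j * cos \<mu> - y * sin \<mu>"
    using explicit_transfer_orbit(1)[OF \<open>b > 1\<close> _ cos sin X_def Y_def] Y_y \<open>0 < \<mu>\<close> by simp
  with bounds Y_y show "X (Suc j) \<le> X j * cos (\<mu> * \<tau>) + Y j * sin (\<mu> * \<tau>) / \<mu>"
    and "X j * cos (\<mu> * \<tau>) + Y j * sin (\<mu> * \<tau>) / \<mu> \<le> X j" by simp_all
qed

lemma g0_cell:
  fixes b t :: real
  assumes "t \<ge> 0"
  obtains j :: nat where "real j \<le> t" "t \<le> real j + 1" "g0 b t = b ^ j"
proof
  let ?j = "nat (\<lceil>t\<rceil> - 1)"
  show "g0 b t = b ^ ?j" by (simp add: g0_def)
  show "real ?j \<le> t" "t \<le> real ?j + 1"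
    using assms ceiling_correct[of t] by (cases "t = 0"; simp)+
qed

lemma weighted_bounds_from_cell_bounds:
  fixes w :: "real \<Rightarrow> real" and b s w0 :: real
  assumes "b > 1" "0 < s" "s < 1" "0 < w0"
    and cell: "\<And>(j::nat) t. t \<in> {real j..real j + 1} \<Longrightarrow>
       w0 * (1 / sqrt b) ^ Suc j * (1 + s * real (Suc j)) \<le> w t \<and>
       w t \<le> w0 * (1 / sqrt b) ^ j * (1 + s * real j)"
  shows "\<exists>C1 C2. 0 < C1 \<and> C1 < C2 \<and>
           (\<forall>t\<ge>0. C1 * (1 + t) / sqrt (g0 b t) \<le> w t \<and> w t \<le> C2 * (1 + t) / sqrt (g0 b t))"
proof (intro exI conjI allI impI)
  define q where "q = 1 / sqrt b"
  have q: "0 < q" "q < 1" using \<open>b > 1\<close> by (simp_all add: q_def)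
  show "0 < w0 * q * s" and "w0 * q * s < w0"
    using assms q mult_strict_mono[of q 1 s 1] by (simp_all add: mult.assoc)
  fix t :: real assume "0 \<le> t"
  then obtain j :: nat where j: "real j \<le> t" "t \<le> real j + 1" "g0 b t = b ^ j"
    by (rule g0_cell)
  have scale: "C * (1 + t) / sqrt (g0 b t) = C * (1 + t) * q ^ j" for C
    by (simp add: j(3) q_def real_sqrt_power power_one_over)
  have "s * t \<le> s * (real j + 1)" using j \<open>0 < s\<close> by simp
  then have "s * (1 + t) \<le> 1 + s * real (Suc j)" using \<open>s < 1\<close> by (simp add: algebra_simps)
  then have "(w0 * q ^ Suc j) * (s * (1 + t)) \<le> (w0 * q ^ Suc j) * (1 + s * real (Suc j))"
    using \<open>0 < w0\<close> q by (intro mult_left_mono) simp_all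
  then have "w0 * q * s * (1 + t) * q ^ j \<le> w0 * q ^ Suc j * (1 + s * real (Suc j))"
    by (simp add: ac_simps)
  moreover have "s * real j \<le> t" using j assms(2,3) mult_left_le_one_le[of "real j" s] by simp
  then have "w0 * q ^ j * (1 + s * real j) \<le> w0 * (1 + t) * q ^ j"
    using \<open>0 < w0\<close> q by (simp add: ac_simps mult_left_mono)
  ultimately show "w0 * q * s * (1 + t) / sqrt (g0 b t) \<le> w t"
    and "w t \<le> w0 * (1 + t) / sqrt (g0 b t)"
    unfolding scale using cell[of t j] j(1,2) by (auto simp: q_def)
qed

theorem lemma4p2:
  fixes b :: real and \<omega> D :: "real \<Rightarrow> real"
  assumes b_gt: "b > 1"
    and nonzero: "\<exists>t\<ge>0. \<omega> t \<noteq> 0"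
    and pos0: "\<omega> 0 > 0"
    and cont: "continuous_on {0..} \<omega>"
    and ode: "\<And>(j::nat) t. real j < t \<Longrightarrow> t < real j + 1 \<Longrightarrow>
                 (\<omega> has_real_derivative D t) (at t) \<and>
                 (D has_real_derivative (- lambda_b b * \<omega> t)) (at t)"
    and deriv0: "(D \<longlongrightarrow> 0) (at_right 0)"
    and jump: "\<And>(j::nat). j \<ge> 1 \<Longrightarrow>
                 \<exists>r. (D \<longlongrightarrow> b * r) (at_left (real j)) \<and> (D \<longlongrightarrow> r) (at_right (real j))"
  shows "\<exists>C1 C2. 0 < C1 \<and> C1 < C2 \<and>
           (\<forall>t\<ge>0. C1 * (1 + t) / sqrt (g0 b t) \<le> \<omega> t \<and>
                   \<omega> t \<le> C2 * (1 + t) / sqrt (g0 b t))"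
proof -
  \<comment> \<open>\<open>nonzero\<close> is implied by \<open>pos0\<close> and not needed.\<close>
  define \<mu> where "\<mu> = arccos (1 / R_b b)"
  define X where "X j = \<omega> 0 * (1 / sqrt b) ^ j * (1 + sin \<mu> * real j)" for j :: nat
  define Y where "Y j = - \<mu> * \<omega> 0 * (1 / sqrt b) ^ Suc j * sin \<mu> * real j" for j :: nat
  have \<mu>: "0 < \<mu>" "\<mu> < pi / 2" using arccos_inverse_R_b_bounds[OF b_gt] by (simp_all add: \<mu>_def)
  note cos\<mu> = cos_arccos_inverse_R_b[OF b_gt, folded \<mu>_def]
  note sin\<mu> = sin_arccos_inverse_R_b[OF b_gt, folded \<mu>_def]
  interpret piecewise_harmonic_orbit \<omega> D b \<mu> X Y
    using \<mu> b_gt cont ode jump deriv0 explicit_transfer_orbit[OF b_gt _ cos\<mu> sin\<mu> X_def Y_def]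
    by unfold_locales (simp_all add: lambda_b_def \<mu>_def X_def Y_def)
  have "X (Suc j) \<le> \<omega> t \<and> \<omega> t \<le> X j" if "t \<in> {real j..real j + 1}" for j t
    using explicit_orbit_cell_bounds[OF b_gt \<mu>(1) _ _ _ _ cos\<mu> sin\<mu> X_def Y_def, of "t - j" j]
      solution_on_cell[OF that] that \<mu>(2) pos0 by simp
  moreover have "0 < sin \<mu>" "sin \<mu> < 1" using b_gt by (simp_all add: sin\<mu>)
  ultimately show ?thesis
    using weighted_bounds_from_cell_bounds[OF b_gt _ _ pos0] by (simp add: X_def)
qed

end
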